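(* Let $M$ be a set of $5$ indivisible items. There exist strict monotone preferences $\preceq_1,\preceq_2$ over $2^M$ for two agents such that for every budget profile $(b_1,b_2)$ with $b_1,b_2>0$ and $\tfrac{4}{3}b_2>b_1>b_2$, the Fisher market with these preferences and budgets has no competitive equilibrium.
   Context: A monotone preference $\preceq_i$ is a complete and transitive weak order over all subsets of $M$ such that $S\preceq_i T$ whenever $S\subseteq T$; it is strict if for any $S\ne T$ either $S\prec_i T$ or $T\prec_i S$ (where $S\prec_i T$ means $S\preceq_i T$ and not $T\preceq_i S$). Given item prices $p=(p_j)_{j\in M}$ with $p(S)=\sum_{j\in S}p_j$, a bundle $S$ is demanded by agent $i$ with budget $b_i$ if $p(S)\le b_i$ and $p(T)>b_i$ for every $T$ with $S\prec_i T$. A competitive equilibrium is a pair $(\mathcal S,p)$ where $\mathcal S=(S_1,S_2)$ is a partition of all items of $M$ between the two agents and $p$ is a price vector, such that $S_i$ is demanded by agent $i$ at prices $p$ for each $i$. *)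

theory Defs
  imports Complex_Main
begin

(* A preference over subsets of M is a relation le :: 'a set => 'a set => bool,
   where "le S T" means S \<preceq> T.  Only bundles S \<subseteq> M matter. *)

definition strict_pref :: "('a set \<Rightarrow> 'a set \<Rightarrow> bool) \<Rightarrow> 'a set \<Rightarrow> 'a set \<Rightarrow> bool" where
  "strict_pref le S T \<longleftrightarrow> le S T \<and> \<not> le T S"

definition monotone_pref :: "'a set \<Rightarrow> ('a set \<Rightarrow> 'a set \<Rightarrow> bool) \<Rightarrow> bool" where
  "monotone_pref M le \<longleftrightarrow>
     (\<forall>S T. S \<subseteq> M \<longrightarrow> T \<subseteq> M \<longrightarrow> le S T \<or> le T S) \<and>
     (\<forall>S T U. S \<subseteq> M \<longrightarrow> T \<subseteq> M \<longrightarrow> U \<subseteq> M \<longrightarrow> le S T \<longrightarrow> le T U \<longrightarrow> le S U) \<and>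
     (\<forall>S T. T \<subseteq> M \<longrightarrow> S \<subseteq> T \<longrightarrow> le S T)"

definition strict_monotone_pref :: "'a set \<Rightarrow> ('a set \<Rightarrow> 'a set \<Rightarrow> bool) \<Rightarrow> bool" where
  "strict_monotone_pref M le \<longleftrightarrow> monotone_pref M le \<and>
     (\<forall>S T. S \<subseteq> M \<longrightarrow> T \<subseteq> M \<longrightarrow> S \<noteq> T \<longrightarrow> strict_pref le S T \<or> strict_pref le T S)"

definition price :: "('a \<Rightarrow> real) \<Rightarrow> 'a set \<Rightarrow> real" where
  "price p S = (\<Sum>j\<in>S. p j)"

definition demanded :: "'a set \<Rightarrow> ('a set \<Rightarrow> 'a set \<Rightarrow> bool) \<Rightarrow> real \<Rightarrow> ('a \<Rightarrow> real) \<Rightarrow> 'a set \<Rightarrow> bool" where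
  "demanded M le b p S \<longleftrightarrow> S \<subseteq> M \<and> price p S \<le> b \<and>
     (\<forall>T. T \<subseteq> M \<longrightarrow> strict_pref le S T \<longrightarrow> price p T > b)"

definition competitive_equilibrium ::
  "'a set \<Rightarrow> ('a set \<Rightarrow> 'a set \<Rightarrow> bool) \<Rightarrow> ('a set \<Rightarrow> 'a set \<Rightarrow> bool) \<Rightarrow> real \<Rightarrow> real
    \<Rightarrow> 'a set \<Rightarrow> 'a set \<Rightarrow> ('a \<Rightarrow> real) \<Rightarrow> bool" where
  "competitive_equilibrium M le1 le2 b1 b2 S1 S2 p \<longleftrightarrow>
     S1 \<union> S2 = M \<and> S1 \<inter> S2 = {} \<and>
     (\<forall>j\<in>M. p j \<ge> 0) \<and>
     demanded M le1 b1 p S1 \<and> demanded M le2 b2 p S2"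

end

theory Submission
  imports Defs "HOL-Library.Product_Order"
begin

(* Both preferences are strict rankings of the 32 bundles that extend inclusion. In an
   equilibrium agent 1 gets some bundle S and agent 2 its complement; each agent can afford its
   own bundle but no bundle it ranks higher. For every S these conditions form a linear system in
   the five prices that is infeasible once b2 < b1 < 4/3 b2. For instance, if S = {a, b} then
   agent 1 ranks both {a, d} and {b, c, e} above S, so 2 b1 < p(M) <= b1 + b2, contradicting
   b2 < b1. *)

definition pref_of_rank :: "('a set \<Rightarrow> nat) \<Rightarrow> 'a set \<Rightarrow> 'a set \<Rightarrow> bool" where
  "pref_of_rank r S T \<longleftrightarrow> r S \<le> r T"

lemma strict_monotone_pref_of_rank:
  assumes mono: "\<And>S T. S \<subseteq> T \<Longrightarrow> T \<subseteq> M \<Longrightarrow> r S \<le> r T"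
    and inj: "inj_on r (Pow M)"
  shows "strict_monotone_pref M (pref_of_rank r)"
proof -
  have "r S \<noteq> r T" if "S \<subseteq> M" "T \<subseteq> M" "S \<noteq> T" for S T
    using inj_onD[OF inj] that by blast
  then show ?thesis
    unfolding strict_monotone_pref_def monotone_pref_def strict_pref_def pref_of_rank_def
    using mono by (auto simp: not_le nat_neq_iff)
qed

lemma demanded_pref_of_rank_iff:
  "demanded M (pref_of_rank r) b p S \<longleftrightarrow>
     S \<subseteq> M \<and> price p S \<le> b \<and> (\<forall>T \<subseteq> M. r S < r T \<longrightarrow> b < price p T)"
  unfolding demanded_def strict_pref_def pref_of_rank_def by auto

primrec position :: "'b list \<Rightarrow> 'b \<Rightarrow> nat" where
  "position [] x = 0"
| "position (y # ys) x = (if x = y then 0 else Suc (position ys x))"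

lemma position_less_length: "x \<in> set xs \<Longrightarrow> position xs x < length xs"
  by (induction xs) auto

lemma nth_position: "x \<in> set xs \<Longrightarrow> xs ! position xs x = x"
  by (induction xs) auto

lemma position_nth: "distinct xs \<Longrightarrow> i < length xs \<Longrightarrow> position xs (xs ! i) = i"
proof (induction xs arbitrary: i)
  case (Cons y ys)
  then show ?case by (cases i) auto
qed simp

lemma inj_on_position: "inj_on (position xs) (set xs)"
  by (metis inj_onI nth_position)

lemma position_less_if_in_set_drop:
  assumes "distinct xs" and "y \<in> set (drop (Suc (position xs x)) xs)"
  shows "position xs x < position xs y"
proof -
  obtain i where "i < length xs - Suc (position xs x)" and "y = xs ! (Suc (position xs x) + i)"
    using assms(2) by (auto simp: in_set_conv_nth)
  then show ?thesis using assms(1) by (simp add: position_nth)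
qed

lemma distinct_if_sorted_wrt_not_le:
  fixes xs :: "'b::preorder list"
  shows "sorted_wrt (\<lambda>x y. \<not> y \<le> x) xs \<Longrightarrow> distinct xs"
  by (induction xs) auto

lemma position_mono:
  fixes xs :: "'b::preorder list"
  assumes sorted: "sorted_wrt (\<lambda>x y. \<not> y \<le> x) xs"
    and "x \<in> set xs" "y \<in> set xs" "x \<le> y"
  shows "position xs x \<le> position xs y"
proof (rule ccontr)
  assume "\<not> position xs x \<le> position xs y"
  then have "\<not> xs ! position xs x \<le> xs ! position xs y"
    using sorted_wrt_nth_less[OF sorted _ position_less_length[OF assms(2)]] by simp
  then show False using assms(2-4) by (simp add: nth_position)
qed

type_synonym profile = "bool \<times> bool \<times> bool \<times> bool \<times> bool"

definition profile_of_indices :: "nat list \<Rightarrow> profile" where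
  "profile_of_indices is = (0 \<in> set is, 1 \<in> set is, 2 \<in> set is, 3 \<in> set is, 4 \<in> set is)"

(* Item i is the i-th of the items a, b, c, d, e of the locale below; bundles are listed from
   least to most preferred. *)
definition ranking1 :: "profile list" where
  "ranking1 = map profile_of_indices
    [[], [4], [2], [2, 4], [0], [0, 4], [0, 2], [0, 2, 4],
     [3], [2, 3], [1], [3, 4], [1, 4], [2, 3, 4], [1, 2], [1, 3],
     [1, 2, 3], [1, 3, 4], [0, 1], [0, 1, 4], [0, 3], [0, 3, 4], [0, 1, 3], [0, 1, 3, 4],
     [0, 1, 2], [1, 2, 4], [0, 1, 2, 4], [0, 2, 3], [1, 2, 3, 4], [0, 2, 3, 4], [0, 1, 2, 3], [0, 1, 2, 3, 4]]"

definition ranking2 :: "profile list" where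
  "ranking2 = map profile_of_indices
    [[], [3], [2], [4], [2, 4], [0], [0, 2], [1],
     [0, 3], [1, 4], [3, 4], [1, 3], [0, 4], [1, 3, 4], [1, 2], [0, 3, 4],
     [1, 2, 4], [2, 3], [2, 3, 4], [0, 2, 4], [0, 2, 3], [0, 2, 3, 4], [1, 2, 3], [1, 2, 3, 4],
     [0, 1], [0, 1, 3], [0, 1, 4], [0, 1, 2], [0, 1, 3, 4], [0, 1, 2, 4], [0, 1, 2, 3], [0, 1, 2, 3, 4]]"

lemma set_ranking1: "set ranking1 = UNIV"
proof -
  have "(xa, xb, xc, xd, xe) \<in> set ranking1" for xa xb xc xd xe
    by (cases xa; cases xb; cases xc; cases xd; cases xe)
      (simp_all add: ranking1_def profile_of_indices_def)
  then show ?thesis by auto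
qed

lemma set_ranking2: "set ranking2 = UNIV"
proof -
  have "(xa, xb, xc, xd, xe) \<in> set ranking2" for xa xb xc xd xe
    by (cases xa; cases xb; cases xc; cases xd; cases xe)
      (simp_all add: ranking2_def profile_of_indices_def)
  then show ?thesis by auto
qed

lemma sorted_ranking1: "sorted_wrt (\<lambda>x y. \<not> y \<le> x) ranking1"
  by (simp add: ranking1_def profile_of_indices_def)

lemma sorted_ranking2: "sorted_wrt (\<lambda>x y. \<not> y \<le> x) ranking2"
  by (simp add: ranking2_def profile_of_indices_def)

lemma distinct_ranking1: "distinct ranking1"
  by (rule distinct_if_sorted_wrt_not_le[OF sorted_ranking1])

lemma distinct_ranking2: "distinct ranking2"
  by (rule distinct_if_sorted_wrt_not_le[OF sorted_ranking2])

locale five_items =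
  fixes a b c d e :: 'a
  assumes distinct_items: "distinct [a, b, c, d, e]"
begin

abbreviation items :: "'a set" where
  "items \<equiv> {a, b, c, d, e}"

definition profile :: "'a set \<Rightarrow> profile" where
  "profile S = (a \<in> S, b \<in> S, c \<in> S, d \<in> S, e \<in> S)"

fun bundle_of :: "profile \<Rightarrow> 'a set" where
  "bundle_of (ya, yb, yc, yd, ye) =
     {x. ya \<and> x = a \<or> yb \<and> x = b \<or> yc \<and> x = c \<or> yd \<and> x = d \<or> ye \<and> x = e}"

fun profile_price :: "('a \<Rightarrow> real) \<Rightarrow> profile \<Rightarrow> real" where
  "profile_price p (ya, yb, yc, yd, ye) =
     (if ya then p a else 0) + (if yb then p b else 0) + (if yc then p c else 0) +
     (if yd then p d else 0) + (if ye then p e else 0)"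

lemma bundle_of_subset: "bundle_of y \<subseteq> items"
  by (cases y) auto

lemma profile_bundle_of: "profile (bundle_of y) = y"
  using distinct_items by (cases y) (auto simp: profile_def)

lemma bundle_of_profile: "S \<subseteq> items \<Longrightarrow> bundle_of (profile S) = S"
  by (auto simp: profile_def)

lemma price_bundle_of: "price p (bundle_of y) = profile_price p y"
proof (cases y)
  case (fields ya yb yc yd ye)
  have "a \<in> bundle_of y \<longleftrightarrow> ya" "b \<in> bundle_of y \<longleftrightarrow> yb" "c \<in> bundle_of y \<longleftrightarrow> yc"
    "d \<in> bundle_of y \<longleftrightarrow> yd" "e \<in> bundle_of y \<longleftrightarrow> ye"
    using profile_bundle_of[of y] by (simp_all add: fields profile_def)
  moreover have "price p (bundle_of y) = (\<Sum>x\<in>items. if x \<in> bundle_of y then p x else 0)"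
    unfolding price_def using bundle_of_subset
    by (simp add: sum.inter_restrict[symmetric] Int_absorb1)
  ultimately show ?thesis
    using distinct_items by (simp add: fields add.assoc)
qed

lemma price_eq_profile_price: "S \<subseteq> items \<Longrightarrow> price p S = profile_price p (profile S)"
  by (metis bundle_of_profile price_bundle_of)

lemma profile_mono: "S \<subseteq> T \<Longrightarrow> profile S \<le> profile T"
  by (auto simp: profile_def)

lemma profile_Diff: "profile (items - S) = - profile S"
  by (simp add: profile_def)

lemma inj_on_profile: "inj_on profile (Pow items)"
  by (metis PowD bundle_of_profile inj_onI)

definition ranking_pref :: "profile list \<Rightarrow> 'a set \<Rightarrow> 'a set \<Rightarrow> bool" where
  "ranking_pref xs = pref_of_rank (\<lambda>S. position xs (profile S))"

lemma strict_monotone_ranking_pref: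
  assumes "set xs = UNIV" and "sorted_wrt (\<lambda>x y. \<not> y \<le> x) xs"
  shows "strict_monotone_pref items (ranking_pref xs)"
  unfolding ranking_pref_def
proof (rule strict_monotone_pref_of_rank)
  show "position xs (profile S) \<le> position xs (profile T)" if "S \<subseteq> T" for S T
    using position_mono[OF assms(2)] profile_mono[OF that] assms(1) by simp
  have "inj_on (position xs) (profile ` Pow items)"
    using inj_on_position[of xs] assms(1) by (auto intro: inj_on_subset)
  then show "inj_on (\<lambda>S. position xs (profile S)) (Pow items)"
    using comp_inj_on[OF inj_on_profile] by (simp add: comp_def)
qed

lemma demanded_ranking_pref_unaffordable:
  assumes "demanded items (ranking_pref xs) w p S" and "distinct xs"
    and "y \<in> set (drop (Suc (position xs (profile S))) xs)"
  shows "w < profile_price p y"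
proof -
  have "position xs (profile S) < position xs (profile (bundle_of y))"
    using position_less_if_in_set_drop[OF assms(2,3)] by (simp add: profile_bundle_of)
  then have "w < price p (bundle_of y)"
    using assms(1) bundle_of_subset by (auto simp: ranking_pref_def demanded_pref_of_rank_iff)
  then show ?thesis by (simp add: price_bundle_of)
qed

lemma no_supporting_prices:
  assumes "b2 < b1" and "3 * b1 < 4 * b2" and "\<forall>j\<in>items. 0 \<le> p j"
    and "profile_price p x \<le> b1" and "profile_price p (- x) \<le> b2"
    and "\<forall>y \<in> set (drop (Suc (position ranking1 x)) ranking1). b1 < profile_price p y"
    and "\<forall>y \<in> set (drop (Suc (position ranking2 (- x))) ranking2). b2 < profile_price p y"
  shows False
proof (cases x)
  case (fields xa xb xc xd xe)
  \<comment> \<open>evaluated once here instead of in each of the 32 cases below, each of which simp's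
    linear arithmetic then refutes\<close>
  note rankings = ranking1_def[unfolded profile_of_indices_def, simplified]
    ranking2_def[unfolded profile_of_indices_def, simplified]
  show False
    using assms unfolding fields rankings
    by (cases xa; cases xb; cases xc; cases xd; cases xe) simp_all
qed

lemma no_competitive_equilibrium:
  assumes "b2 < b1" and "3 * b1 < 4 * b2"
  shows "\<not> competitive_equilibrium items (ranking_pref ranking1) (ranking_pref ranking2)
    b1 b2 S1 S2 p"
proof
  assume "competitive_equilibrium items (ranking_pref ranking1) (ranking_pref ranking2)
    b1 b2 S1 S2 p"
  then have S1: "S1 \<subseteq> items" and S2: "S2 = items - S1" and nonneg: "\<forall>j\<in>items. 0 \<le> p j"
    and demanded1: "demanded items (ranking_pref ranking1) b1 p S1"
    and demanded2: "demanded items (ranking_pref ranking2) b2 p S2"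
    unfolding competitive_equilibrium_def by blast+
  have profile_S2: "profile S2 = - profile S1"
    using S2 by (simp add: profile_Diff)
  show False
  proof (rule no_supporting_prices[OF assms nonneg])
    show "profile_price p (profile S1) \<le> b1"
      using demanded1 S1 by (simp add: demanded_def price_eq_profile_price)
    show "profile_price p (- profile S1) \<le> b2"
      using demanded2 S2 by (simp add: demanded_def price_eq_profile_price flip: profile_S2)
    show "\<forall>y \<in> set (drop (Suc (position ranking1 (profile S1))) ranking1). b1 < profile_price p y"
      using demanded_ranking_pref_unaffordable[OF demanded1 distinct_ranking1] by blast
    show "\<forall>y \<in> set (drop (Suc (position ranking2 (- profile S1))) ranking2). b2 < profile_price p y"
      using demanded_ranking_pref_unaffordable[OF demanded2 distinct_ranking2]
      by (simp add: profile_S2)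
  qed
qed

end

lemma card_eq_5_obtain:
  assumes "card M = 5"
  obtains a b c d e where "distinct [a, b, c, d, e]" and "M = {a, b, c, d, e}"
proof -
  have "finite M" using assms by (intro card_ge_0_finite) simp
  then obtain xs where xs: "set xs = M" "distinct xs" using finite_distinct_list by blast
  then have "length xs = 5" using assms distinct_card by fastforce
  then obtain a b c d e where "xs = [a, b, c, d, e]"
    by (auto simp: numeral_eq_Suc length_Suc_conv)
  then show thesis using that xs by auto
qed

theorem mainTheorem3:
  fixes M :: "'a set"
  assumes "finite M" and "card M = 5"
  shows "\<exists>le1 le2. strict_monotone_pref M le1 \<and> strict_monotone_pref M le2 \<and>
           (\<forall>b1 b2 :: real. b1 > 0 \<longrightarrow> b2 > 0 \<longrightarrow> (4/3) * b2 > b1 \<longrightarrow> b1 > b2 \<longrightarrow>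
              \<not> (\<exists>S1 S2 p. competitive_equilibrium M le1 le2 b1 b2 S1 S2 p))"
proof -
  obtain a b c d e where "distinct [a, b, c, d, e]" and M: "M = {a, b, c, d, e}"
    using card_eq_5_obtain[OF assms(2)] .
  then interpret five_items a b c d e by unfold_locales
  show ?thesis
  proof (intro exI conjI allI impI)
    \<comment> \<open>finiteness of M and positivity of the budgets follow from the other hypotheses\<close>
    show "strict_monotone_pref M (ranking_pref ranking1)"
      "strict_monotone_pref M (ranking_pref ranking2)"
      unfolding M
      by (intro strict_monotone_ranking_pref set_ranking1 set_ranking2 sorted_ranking1
          sorted_ranking2)+
    fix b1 b2 :: real
    assume "4 / 3 * b2 > b1" and "b1 > b2"
    then show "\<not> (\<exists>S1 S2 p.
      competitive_equilibrium M (ranking_pref ranking1) (ranking_pref ranking2) b1 b2 S1 S2 p)"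
      unfolding M using no_competitive_equilibrium by simp
  qed
qed

end
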